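(* Let $d>0$, $\alpha\in\mathbb R$, $p\in C^1([a,b])$, and let $(\lambda_1,\Phi_1)$ be the principal eigenpair of $$(d\Phi_x-\alpha\Phi)_x+(p(x)+\lambda)\Phi=0,\ a<x<b;\qquad d\Phi_x-\alpha\Phi=0\ \text{at }x=a,b,$$ with $\Phi_1>0$ on $[a,b]$. Then: (a) if $p_x\le0$ on $[a,b]$ and $p_x\not\equiv0$, then $d\,(\Phi_1)_x<\alpha\Phi_1$ in $(a,b)$; (b) if $p_x\ge0$ on $[a,b]$ and $p_x\not\equiv0$, then $d\,(\Phi_1)_x>\alpha\Phi_1$ in $(a,b)$.
   Context: The principal eigenvalue $\lambda_1$ is the smallest eigenvalue; it is simple and its eigenfunction can be chosen strictly positive. *)

theory Defs
  imports "HOL-Analysis.Analysis"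
begin

text \<open>The flux derivative (d Phi' - alpha Phi)' is written out as d Phi'' - alpha Phi'.\<close>
definition is_eigenfunction ::
  "real \<Rightarrow> real \<Rightarrow> (real \<Rightarrow> real) \<Rightarrow> real \<Rightarrow> real \<Rightarrow> real \<Rightarrow> (real \<Rightarrow> real) \<Rightarrow> bool" where
  "is_eigenfunction d \<alpha> p a b lam \<Phi> \<longleftrightarrow>
     (\<exists>\<Phi>' \<Phi>''.
        (\<forall>x\<in>{a..b}. (\<Phi> has_real_derivative \<Phi>' x) (at x within {a..b}) \<and>
                     (\<Phi>' has_real_derivative \<Phi>'' x) (at x within {a..b})) \<and>
        continuous_on {a..b} \<Phi>'' \<and>
        (\<forall>x\<in>{a<..<b}. d * \<Phi>'' x - \<alpha> * \<Phi>' x + (p x + lam) * \<Phi> x = 0) \<and>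
        d * \<Phi>' a - \<alpha> * \<Phi> a = 0 \<and>
        d * \<Phi>' b - \<alpha> * \<Phi> b = 0) \<and>
     (\<exists>x\<in>{a..b}. \<Phi> x \<noteq> 0)"

definition is_eigenvalue ::
  "real \<Rightarrow> real \<Rightarrow> (real \<Rightarrow> real) \<Rightarrow> real \<Rightarrow> real \<Rightarrow> real \<Rightarrow> bool" where
  "is_eigenvalue d \<alpha> p a b lam \<longleftrightarrow> (\<exists>\<Phi>. is_eigenfunction d \<alpha> p a b lam \<Phi>)"

definition is_principal_eigenvalue ::
  "real \<Rightarrow> real \<Rightarrow> (real \<Rightarrow> real) \<Rightarrow> real \<Rightarrow> real \<Rightarrow> real \<Rightarrow> bool" where
  "is_principal_eigenvalue d \<alpha> p a b lam1 \<longleftrightarrow>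
     is_eigenvalue d \<alpha> p a b lam1 \<and> (\<forall>lam. is_eigenvalue d \<alpha> p a b lam \<longrightarrow> lam1 \<le> lam)"

end

theory Submission
  imports Defs
begin

text \<open>
  Let \<open>w = d \<Phi>' - \<alpha> \<Phi>\<close> be the flux and \<open>z = w / \<Phi>\<close>, so that the boundary conditions say
  \<open>z a = z b = 0\<close>, and put \<open>\<epsilon> x = exp (- \<alpha> x / d)\<close>. Along solutions of the equation,
  \<open>z' = - E / (\<epsilon> \<Phi>\<^sup>2)\<close> for the weighted energy \<open>E = \<epsilon> (\<Phi>' w + (p + \<lambda>) \<Phi>\<^sup>2)\<close>, and
  \<open>E' = \<epsilon> p' \<Phi>\<^sup>2\<close>. If \<open>p' \<le> 0\<close> and \<open>p' \<noteq> 0\<close>, then \<open>-E\<close> is nondecreasing and not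
  identically zero, so \<open>z\<close>, whose derivative has the sign of \<open>-E\<close>, first decreases and then
  increases; vanishing at both ends, it is negative in between. The case \<open>p' \<ge> 0\<close> is the
  same argument with all signs reversed.
\<close>

lemma deriv_factor_eq_0_if_nonpos_and_le_at_ends:
  fixes z k g :: "real \<Rightarrow> real"
  assumes cont: "continuous_on {s..t} z" and ends: "z s \<le> z t"
    and deriv: "\<And>v. v \<in> {s<..<t} \<Longrightarrow> (z has_real_derivative k v * g v) (at v)"
    and k_pos: "\<And>v. v \<in> {s<..<t} \<Longrightarrow> k v > 0"
    and g_nonpos: "\<And>v. v \<in> {s<..<t} \<Longrightarrow> g v \<le> 0"
    and u: "u \<in> {s<..<t}"
  shows "g u = 0"
proof -
  have nonincreasing: "z x \<ge> z y" if "s \<le> x" "x \<le> y" "y \<le> t" for x y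
  proof (rule DERIV_nonpos_imp_decreasing_open[OF \<open>x \<le> y\<close>])
    show "continuous_on {x..y} z"
      using continuous_on_subset[OF cont] that by auto
    fix v assume "x < v" "v < y"
    with that have v: "v \<in> {s<..<t}" by auto
    show "\<exists>l. (z has_real_derivative l) (at v) \<and> l \<le> 0"
      using deriv[OF v] k_pos[OF v] g_nonpos[OF v] by (meson less_imp_le mult_nonneg_nonpos)
  qed
  have const: "z v = z s" if "v \<in> {s..t}" for v
    using nonincreasing[of s v] nonincreasing[of v t] ends that by fastforce
  have "k u * g u = 0"
  proof (rule DERIV_local_const[OF deriv[OF u]])
    show "0 < min (u - s) (t - u)" using u by simp
    show "\<forall>y. \<bar>u - y\<bar> < min (u - s) (t - u) \<longrightarrow> z u = z y"
      using u by (auto intro!: const[THEN trans] const[symmetric])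
  qed
  then show ?thesis using k_pos[OF u] by simp
qed

lemma neg_between_zeros_if_deriv_factor_mono:
  fixes z k g :: "real \<Rightarrow> real"
  assumes "a < b" and cont: "continuous_on {a..b} z" and "z a = 0" "z b = 0"
    and deriv: "\<And>v. v \<in> {a<..<b} \<Longrightarrow> (z has_real_derivative k v * g v) (at v)"
    and k_pos: "\<And>v. v \<in> {a<..<b} \<Longrightarrow> k v > 0"
    and mono: "mono_on {a<..<b} g"
    and nonzero: "\<exists>y\<in>{a<..<b}. g y \<noteq> 0"
    and x: "x \<in> {a<..<b}"
  shows "z x < 0"
proof (rule ccontr)
  assume "\<not> z x < 0"
  then have "z x \<ge> 0" by simp
  have left: "\<forall>v\<in>{a<..<x}. g v = 0" if "g x \<le> 0"
  proof
    fix v assume "v \<in> {a<..<x}"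
    show "g v = 0"
    proof (rule deriv_factor_eq_0_if_nonpos_and_le_at_ends
        [where s = a and t = x and z = z and k = k and g = g])
      show "continuous_on {a..x} z" using continuous_on_subset[OF cont] x by auto
      show "g u \<le> 0" if "u \<in> {a<..<x}" for u
        using mono_onD[OF mono, of u x] \<open>g x \<le> 0\<close> x that by auto
      show "z a \<le> z x" using \<open>z a = 0\<close> \<open>z x \<ge> 0\<close> by simp
      show "(z has_real_derivative k u * g u) (at u)" "k u > 0" if "u \<in> {a<..<x}" for u
        using deriv[of u] k_pos[of u] that x by auto
    qed fact
  qed
  have right: "\<forall>v\<in>{x<..<b}. g v = 0" if "g x \<ge> 0"
  proof
    fix v assume "v \<in> {x<..<b}"
    have "- g v = 0"
    proof (rule deriv_factor_eq_0_if_nonpos_and_le_at_ends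
        [where s = x and t = b and z = "\<lambda>v. - z v" and k = k and g = "\<lambda>v. - g v"])
      show "continuous_on {x..b} (\<lambda>v. - z v)"
        using x by (intro continuous_on_minus continuous_on_subset[OF cont]) auto
      show "((\<lambda>v. - z v) has_real_derivative k u * - g u) (at u)" if "u \<in> {x<..<b}" for u
        using DERIV_minus[OF deriv[of u]] that x by auto
      show "- g u \<le> 0" if "u \<in> {x<..<b}" for u
        using mono_onD[OF mono, of x u] \<open>g x \<ge> 0\<close> x that by auto
      show "- z x \<le> - z b" using \<open>z b = 0\<close> \<open>z x \<ge> 0\<close> by simp
      show "k u > 0" if "u \<in> {x<..<b}" for u
        using k_pos[of u] that x by auto
    qed fact
    then show "g v = 0" by simp
  qed
  have "g x = 0"
  proof (cases "g x \<le> 0")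
    case True
    define m where "m = (a + x) / 2"
    have m: "m \<in> {a<..<x}" using x by (auto simp: m_def)
    have "g m \<le> g x" using mono_onD[OF mono, of m x] m x by simp
    then show ?thesis using left[OF True] m True by simp
  next
    case False
    define m where "m = (x + b) / 2"
    have m: "m \<in> {x<..<b}" using x by (auto simp: m_def)
    have "g x \<le> g m" using mono_onD[OF mono, of x m] m x by simp
    moreover have "g m = 0" using right m False by simp
    ultimately show ?thesis using False by simp
  qed
  then have "g v = 0" if "v \<in> {a<..<b}" for v
  proof (cases v x rule: linorder_cases)
    case less
    then show ?thesis using left \<open>g x = 0\<close> that by simp
  next
    case greater
    then show ?thesis using right \<open>g x = 0\<close> that by simp
  qed (use \<open>g x = 0\<close> in simp)
  then show False using nonzero by blast
qed

lemma neg_between_zeros_if_deriv_factor_has_nonneg_deriv: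
  fixes z k g g' :: "real \<Rightarrow> real"
  assumes "a < b" "continuous_on {a..b} z" "z a = 0" "z b = 0"
    and "\<And>v. v \<in> {a<..<b} \<Longrightarrow> (z has_real_derivative k v * g v) (at v)"
    and "\<And>v. v \<in> {a<..<b} \<Longrightarrow> k v > 0"
    and g_deriv: "\<And>v. v \<in> {a<..<b} \<Longrightarrow> (g has_real_derivative g' v) (at v)"
    and g'_nonneg: "\<And>v. v \<in> {a<..<b} \<Longrightarrow> g' v \<ge> 0"
    and y: "y \<in> {a<..<b}" "g' y \<noteq> 0"
    and "x \<in> {a<..<b}"
  shows "z x < 0"
proof (rule neg_between_zeros_if_deriv_factor_mono[where z = z and k = k and g = g])
  show "mono_on {a<..<b} g"
  proof (rule mono_onI)
    fix r s assume rs: "r \<in> {a<..<b}" "s \<in> {a<..<b}" "r \<le> s"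
    show "g r \<le> g s"
    proof (rule DERIV_nonneg_imp_nondecreasing[OF \<open>r \<le> s\<close>])
      fix v assume "r \<le> v" "v \<le> s"
      with rs have v: "v \<in> {a<..<b}" by auto
      show "\<exists>l. (g has_real_derivative l) (at v) \<and> l \<ge> 0"
        using g_deriv[OF v] g'_nonneg[OF v] by blast
    qed
  qed
  show "\<exists>y\<in>{a<..<b}. g y \<noteq> 0"
  proof (rule ccontr)
    assume "\<not> ?thesis"
    then have "\<forall>u. \<bar>y - u\<bar> < min (y - a) (b - y) \<longrightarrow> g y = g u"
      using y by (auto simp: abs_less_iff)
    moreover have "min (y - a) (b - y) > 0" using y by simp
    ultimately have "g' y = 0" by (rule DERIV_local_const[OF g_deriv[OF y(1)], rotated])
    with y show False by simp
  qed
qed fact+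

definition weighted_energy ::
  "real \<Rightarrow> real \<Rightarrow> real \<Rightarrow> (real \<Rightarrow> real) \<Rightarrow> (real \<Rightarrow> real) \<Rightarrow> (real \<Rightarrow> real) \<Rightarrow> real \<Rightarrow> real"
where
  "weighted_energy d \<alpha> lam p \<Phi> \<Phi>' x =
     exp (- \<alpha> * x / d) * (\<Phi>' x * (d * \<Phi>' x - \<alpha> * \<Phi> x) + (p x + lam) * \<Phi> x ^ 2)"

lemma weighted_energy_has_derivative:
  assumes "d \<noteq> 0"
    and "(\<Phi> has_real_derivative \<Phi>' t) (at t)" "(\<Phi>' has_real_derivative \<Phi>'' t) (at t)"
    and "(p has_real_derivative p' t) (at t)"
    and ode: "d * \<Phi>'' t - \<alpha> * \<Phi>' t + (p t + lam) * \<Phi> t = 0"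
  shows "(weighted_energy d \<alpha> lam p \<Phi> \<Phi>' has_real_derivative
           exp (- \<alpha> * t / d) * p' t * \<Phi> t ^ 2) (at t)"
proof -
  have \<Phi>'': "\<Phi>'' t = (\<alpha> * \<Phi>' t - (p t + lam) * \<Phi> t) / d"
    using ode \<open>d \<noteq> 0\<close> by (simp add: field_simps)
  show ?thesis
    unfolding weighted_energy_def[abs_def]
    apply (rule derivative_eq_intros assms refl)+
    using \<open>d \<noteq> 0\<close> by (simp add: \<Phi>'' field_simps power2_eq_square)
qed

lemma flux_ratio_has_derivative:
  assumes "d \<noteq> 0" "\<Phi> t \<noteq> 0"
    and "(\<Phi> has_real_derivative \<Phi>' t) (at t)" "(\<Phi>' has_real_derivative \<Phi>'' t) (at t)"
    and ode: "d * \<Phi>'' t - \<alpha> * \<Phi>' t + (p t + lam) * \<Phi> t = 0"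
  shows "((\<lambda>x. (d * \<Phi>' x - \<alpha> * \<Phi> x) / \<Phi> x) has_real_derivative
           - weighted_energy d \<alpha> lam p \<Phi> \<Phi>' t / (exp (- \<alpha> * t / d) * \<Phi> t ^ 2)) (at t)"
proof -
  have \<Phi>'': "\<Phi>'' t = (\<alpha> * \<Phi>' t - (p t + lam) * \<Phi> t) / d"
    using ode \<open>d \<noteq> 0\<close> by (simp add: field_simps)
  show ?thesis
    apply (rule derivative_eq_intros assms refl)+
    using assms(1,2) by (simp add: \<Phi>'' weighted_energy_def field_simps power2_eq_square)
qed

lemma eigenfunction_signed_flux_pos:
  fixes d \<alpha> lam \<sigma> :: real and p p' \<Phi> \<Phi>' \<Phi>'' :: "real \<Rightarrow> real"
  assumes "a < b" "d > 0" "\<sigma> \<noteq> 0"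
    and cont: "continuous_on {a..b} \<Phi>" "continuous_on {a..b} \<Phi>'"
    and pos: "\<And>t. t \<in> {a..b} \<Longrightarrow> \<Phi> t > 0"
    and derivs: "\<And>t. t \<in> {a<..<b} \<Longrightarrow> (\<Phi> has_real_derivative \<Phi>' t) (at t)"
      "\<And>t. t \<in> {a<..<b} \<Longrightarrow> (\<Phi>' has_real_derivative \<Phi>'' t) (at t)"
      "\<And>t. t \<in> {a<..<b} \<Longrightarrow> (p has_real_derivative p' t) (at t)"
    and ode: "\<And>t. t \<in> {a<..<b} \<Longrightarrow> d * \<Phi>'' t - \<alpha> * \<Phi>' t + (p t + lam) * \<Phi> t = 0"
    and bc: "d * \<Phi>' a - \<alpha> * \<Phi> a = 0" "d * \<Phi>' b - \<alpha> * \<Phi> b = 0"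
    and sign: "\<And>t. t \<in> {a<..<b} \<Longrightarrow> \<sigma> * p' t \<ge> 0"
    and y: "y \<in> {a<..<b}" "p' y \<noteq> 0"
    and x: "x \<in> {a<..<b}"
  shows "\<sigma> * (d * \<Phi>' x - \<alpha> * \<Phi> x) > 0"
proof -
  define z where "z = (\<lambda>t. - \<sigma> * ((d * \<Phi>' t - \<alpha> * \<Phi> t) / \<Phi> t))"
  define k where "k = (\<lambda>t. 1 / (exp (- \<alpha> * t / d) * \<Phi> t ^ 2))"
  define e where "e = weighted_energy d \<alpha> lam p \<Phi> \<Phi>'"
  define e' where "e' = (\<lambda>t. exp (- \<alpha> * t / d) * p' t * \<Phi> t ^ 2)"
  have "z x < 0"
  proof (rule neg_between_zeros_if_deriv_factor_has_nonneg_deriv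
      [where z = z and k = k and g = "\<lambda>t. \<sigma> * e t" and g' = "\<lambda>t. \<sigma> * e' t"])
    show "continuous_on {a..b} z"
      unfolding z_def using pos by (intro continuous_intros cont) force
    show "z a = 0" "z b = 0" using bc by (simp_all add: z_def)
    fix v assume v: "v \<in> {a<..<b}"
    then have "\<Phi> v > 0" using pos by auto
    have "(z has_real_derivative - \<sigma> * (- e v / (exp (- \<alpha> * v / d) * \<Phi> v ^ 2))) (at v)"
      unfolding z_def e_def using \<open>d > 0\<close> \<open>\<Phi> v > 0\<close>
      by (intro DERIV_cmult flux_ratio_has_derivative[where \<Phi>'' = \<Phi>''] derivs ode v) auto
    then show "(z has_real_derivative k v * (\<sigma> * e v)) (at v)"
      by (simp add: k_def)
    show "k v > 0" using \<open>\<Phi> v > 0\<close> by (simp add: k_def)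
    show "((\<lambda>t. \<sigma> * e t) has_real_derivative \<sigma> * e' v) (at v)"
      unfolding e_def e'_def using \<open>d > 0\<close>
      by (intro DERIV_cmult weighted_energy_has_derivative[where \<Phi>'' = \<Phi>''] derivs ode v) auto
    have "\<sigma> * e' v = exp (- \<alpha> * v / d) * \<Phi> v ^ 2 * (\<sigma> * p' v)"
      by (simp add: e'_def algebra_simps)
    also have "\<dots> \<ge> 0" using sign[OF v] by simp
    finally show "\<sigma> * e' v \<ge> 0" .
  next
    have "\<Phi> y > 0" using pos y by auto
    then show "\<sigma> * e' y \<noteq> 0" using y \<open>\<sigma> \<noteq> 0\<close> by (simp add: e'_def)
  qed (use \<open>a < b\<close> y x in auto)
  moreover have "\<Phi> x > 0" using pos x by auto
  ultimately show ?thesis by (simp add: z_def zero_less_divide_iff divide_less_0_iff)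
qed

lemma ex_interior_nonzero_if_continuous:
  fixes f :: "real \<Rightarrow> real"
  assumes "a < b" "continuous_on {a..b} f" "\<exists>x\<in>{a..b}. f x \<noteq> 0"
  shows "\<exists>y\<in>{a<..<b}. f y \<noteq> 0"
proof (rule ccontr)
  assume "\<not> ?thesis"
  then have "f x = 0" if "x \<in> {a..b}" for x
    using continuous_constant_on_closure[of "{a<..<b}" f 0 x] assms(1,2) that by auto
  then show False using assms(3) by blast
qed

theorem lemma5p1:
  fixes d \<alpha> a b lam1 :: real and p p' \<Phi>1 :: "real \<Rightarrow> real"
  assumes "a < b" and "d > 0"
    and p_deriv: "\<forall>x\<in>{a..b}. (p has_real_derivative p' x) (at x within {a..b})"
    and p'_cont: "continuous_on {a..b} p'"
    and princ: "is_principal_eigenvalue d \<alpha> p a b lam1"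
    and eigf: "is_eigenfunction d \<alpha> p a b lam1 \<Phi>1"
    and pos: "\<forall>x\<in>{a..b}. \<Phi>1 x > 0"
  shows "((\<forall>x\<in>{a..b}. p' x \<le> 0) \<and> (\<exists>x\<in>{a..b}. p' x \<noteq> 0)
            \<longrightarrow> (\<forall>x\<in>{a<..<b}. d * deriv \<Phi>1 x < \<alpha> * \<Phi>1 x))
       \<and> ((\<forall>x\<in>{a..b}. p' x \<ge> 0) \<and> (\<exists>x\<in>{a..b}. p' x \<noteq> 0)
            \<longrightarrow> (\<forall>x\<in>{a<..<b}. d * deriv \<Phi>1 x > \<alpha> * \<Phi>1 x))"
proof -
  obtain \<Phi>' \<Phi>'' where derivs: "\<forall>x\<in>{a..b}. (\<Phi>1 has_real_derivative \<Phi>' x) (at x within {a..b}) \<and>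
                           (\<Phi>' has_real_derivative \<Phi>'' x) (at x within {a..b})"
    and ode: "\<forall>x\<in>{a<..<b}. d * \<Phi>'' x - \<alpha> * \<Phi>' x + (p x + lam1) * \<Phi>1 x = 0"
    and bc: "d * \<Phi>' a - \<alpha> * \<Phi>1 a = 0" "d * \<Phi>' b - \<alpha> * \<Phi>1 b = 0"
    using eigf unfolding is_eigenfunction_def by blast
  have cont: "continuous_on {a..b} \<Phi>1" "continuous_on {a..b} \<Phi>'"
    using derivs by (auto intro: DERIV_continuous_on)
  have interior: "(\<Phi>1 has_real_derivative \<Phi>' t) (at t)" "(\<Phi>' has_real_derivative \<Phi>'' t) (at t)"
      "(p has_real_derivative p' t) (at t)" if "t \<in> {a<..<b}" for t
    using bspec[OF derivs, of t] bspec[OF p_deriv, of t] that by (simp_all add: at_within_Icc_at)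
  have signed: "\<sigma> * (d * deriv \<Phi>1 x - \<alpha> * \<Phi>1 x) > 0"
    if "\<sigma> \<noteq> 0" and sign: "\<forall>t\<in>{a..b}. \<sigma> * p' t \<ge> 0"
      and nonzero: "\<exists>t\<in>{a..b}. p' t \<noteq> 0" and x: "x \<in> {a<..<b}" for \<sigma> x
  proof -
    obtain y where "y \<in> {a<..<b}" "p' y \<noteq> 0"
      using ex_interior_nonzero_if_continuous[OF \<open>a < b\<close> p'_cont nonzero] by blast
    then have "\<sigma> * (d * \<Phi>' x - \<alpha> * \<Phi>1 x) > 0"
      using \<open>a < b\<close> \<open>d > 0\<close> \<open>\<sigma> \<noteq> 0\<close> cont interior bc pos ode sign x
      by (intro eigenfunction_signed_flux_pos[where p' = p' and lam = lam1 and \<Phi>'' = \<Phi>'']) auto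
    then show ?thesis using DERIV_imp_deriv[OF interior(1)[OF x]] by simp
  qed
  show ?thesis
    using signed[of "-1"] signed[of 1] by auto
qed

end
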